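(* Let $n\ge 1$, let $x_1,\dots,x_n$ be distinct integers each greater than $1$, and let $D=\{1,x_1,\dots,x_n\}$. Then $\sigma(D)=2-n+\sum_{i=1}^n x_i$.
   Context: A signed tree is a pair $(T,s)$ where $T$ is a finite tree and $s:E(T)\to\{+,-\}$. The signed degree $sdeg(v)$ of a vertex is the number of incident positive edges minus the number of incident negative edges. $(T,s)$ realizes (satisfies) a set $D$ of integers if $D=\{sdeg(v):v\in V(T)\}$. For a set $D$ containing $1$ or $-1$, $\sigma(D)=\min\{|V(T)|: \text{some signed tree }(T,s)\text{ realizes }D\}$. *)

theory Defs
  imports Main
begin

text \<open>A signing is a function from edges to bool
(True = positive edge, False = negative edge).\<close>

definition is_graph :: "nat set \<Rightarrow> nat set set \<Rightarrow> bool" where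
  "is_graph V E \<longleftrightarrow> finite V \<and> (\<forall>e\<in>E. e \<subseteq> V \<and> card e = 2)"

definition adj_rel :: "nat set set \<Rightarrow> (nat \<times> nat) set" where
  "adj_rel E = {(a, b). {a, b} \<in> E}"

definition connected_graph :: "nat set \<Rightarrow> nat set set \<Rightarrow> bool" where
  "connected_graph V E \<longleftrightarrow> (\<forall>u\<in>V. \<forall>v\<in>V. (u, v) \<in> (adj_rel E)\<^sup>*)"

definition is_cycle :: "nat set set \<Rightarrow> nat list \<Rightarrow> bool" where
  "is_cycle E vs \<longleftrightarrow> length vs \<ge> 3 \<and> distinct vs \<and>
     (\<forall>i < length vs. {vs ! i, vs ! ((i + 1) mod length vs)} \<in> E)"

definition acyclic_graph :: "nat set set \<Rightarrow> bool" where
  "acyclic_graph E \<longleftrightarrow> (\<nexists>vs. is_cycle E vs)"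

definition is_tree :: "nat set \<Rightarrow> nat set set \<Rightarrow> bool" where
  "is_tree V E \<longleftrightarrow> is_graph V E \<and> V \<noteq> {} \<and> connected_graph V E \<and> acyclic_graph E"

definition sdeg :: "(nat set \<Rightarrow> bool) \<Rightarrow> nat set set \<Rightarrow> nat \<Rightarrow> int" where
  "sdeg s E v = int (card {e\<in>E. v \<in> e \<and> s e}) - int (card {e\<in>E. v \<in> e \<and> \<not> s e})"

definition realizes :: "nat set \<Rightarrow> nat set set \<Rightarrow> (nat set \<Rightarrow> bool) \<Rightarrow> int set \<Rightarrow> bool" where
  "realizes V E s D \<longleftrightarrow> D = sdeg s E ` V"

definition sigma :: "int set \<Rightarrow> nat" where
  "sigma D = (LEAST k. \<exists>V E s. is_tree V E \<and> realizes V E s D \<and> card V = k)"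

end

(*
  Lower bound: in a tree the signed degrees sum to at most 2 |E| = 2 |V| - 2.  If all values in D
  are at least 1, pick one vertex for each value d of D; every other vertex contributes at least 1,
  so |V| + (\<Sum>d\<in>D. d - 1) \<le> 2 |V| - 2.  Upper bound: an all-positive caterpillar attains this.
  Start from a single edge and, for each d > 1, attach d - 1 new leaves to the current
  distinguished leaf, one of which becomes the next distinguished leaf.
*)
theory Submission
  imports Defs
begin

definition degree :: "nat set set \<Rightarrow> nat \<Rightarrow> nat" where
  "degree E v = card {e\<in>E. v \<in> e}"

lemma finite_edges: "is_graph V E \<Longrightarrow> finite E"
  unfolding is_graph_def by (meson PowI finite_Pow_iff finite_subset subsetI)

lemma sdeg_le_degree: "finite E \<Longrightarrow> sdeg s E v \<le> int (degree E v)"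
proof -
  assume "finite E"
  then have "card {e\<in>E. v \<in> e \<and> s e} \<le> degree E v"
    unfolding degree_def by (intro card_mono) auto
  then show ?thesis by (simp add: sdeg_def)
qed

lemma sdeg_all_positive: "sdeg (\<lambda>_. True) E v = int (degree E v)"
  by (simp add: sdeg_def degree_def)

lemma degree_insert:
  "finite E \<Longrightarrow> f \<notin> E \<Longrightarrow> degree (insert f E) v = degree E v + (if v \<in> f then 1 else 0)"
proof -
  assume "finite E" "f \<notin> E"
  moreover have "{e\<in>insert f E. v \<in> e} =
      (if v \<in> f then insert f {e\<in>E. v \<in> e} else {e\<in>E. v \<in> e})"
    by auto
  ultimately show ?thesis by (simp add: degree_def)
qed

lemma sum_degree: "is_graph V E \<Longrightarrow> (\<Sum>v\<in>V. degree E v) = 2 * card E"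
  unfolding degree_def
proof (rule sum_multicount)
  assume g: "is_graph V E"
  show "finite E" using finite_edges[OF g] .
  show "finite V" using g by (simp add: is_graph_def)
  show "\<forall>e\<in>E. card {v\<in>V. v \<in> e} = 2"
  proof
    fix e assume "e \<in> E"
    then have "{v\<in>V. v \<in> e} = e" "card e = 2" using g by (auto simp: is_graph_def)
    then show "card {v\<in>V. v \<in> e} = 2" by simp
  qed
qed

lemma sum_sdeg_le: "is_graph V E \<Longrightarrow> (\<Sum>v\<in>V. sdeg s E v) \<le> 2 * int (card E)"
proof -
  assume g: "is_graph V E"
  have "(\<Sum>v\<in>V. sdeg s E v) \<le> (\<Sum>v\<in>V. int (degree E v))"
    by (rule sum_mono) (rule sdeg_le_degree[OF finite_edges[OF g]])
  also have "\<dots> = 2 * int (card E)"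
    using sum_degree[OF g] by (metis of_nat_mult of_nat_numeral of_nat_sum)
  finally show ?thesis .
qed

definition simple_path :: "nat set set \<Rightarrow> nat list \<Rightarrow> bool" where
  "simple_path E vs \<longleftrightarrow> distinct vs \<and> (\<forall>i. Suc i < length vs \<longrightarrow> {vs ! i, vs ! Suc i} \<in> E)"

lemma simple_path_Cons:
  "simple_path E (w # vs) \<longleftrightarrow>
     w \<notin> set vs \<and> (vs \<noteq> [] \<longrightarrow> {w, hd vs} \<in> E) \<and> simple_path E vs"
  by (cases vs) (auto simp: simple_path_def nth_Cons split: nat.splits)

lemma is_cycle_close_simple_path:
  assumes p: "simple_path E vs" and j: "2 \<le> j" "j < length vs" and e: "{vs ! j, vs ! 0} \<in> E"
  shows "is_cycle E (take (Suc j) vs)"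
  unfolding is_cycle_def
proof (intro conjI allI impI)
  show "3 \<le> length (take (Suc j) vs)" "distinct (take (Suc j) vs)"
    using p j by (auto simp: simple_path_def)
  fix i assume "i < length (take (Suc j) vs)"
  then consider "i < j" | "i = j" using j by fastforce
  then show "{take (Suc j) vs ! i, take (Suc j) vs ! ((i + 1) mod length (take (Suc j) vs))} \<in> E"
    by cases (use p j e in \<open>auto simp: simple_path_def\<close>)
qed

lemma acyclic_graph_has_leaf:
  assumes g: "is_graph V E" and ac: "acyclic_graph E" and ne: "E \<noteq> {}"
  obtains v where "v \<in> V" "degree E v \<le> 1"
proof -
  let ?P = "\<lambda>vs. simple_path E vs \<and> set vs \<subseteq> V \<and> 2 \<le> length vs"
  obtain a b where ab: "{a, b} \<in> E" "a \<noteq> b"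
    using g ne by (force simp: is_graph_def card_2_iff)
  then have "?P [a, b]" using g by (auto simp: simple_path_Cons simple_path_def is_graph_def)
  moreover have "length vs < Suc (card V)" if "?P vs" for vs
    using that g by (metis distinct_card card_mono is_graph_def le_imp_less_Suc simple_path_def)
  ultimately obtain vs where vs: "?P vs" and longest: "\<And>ys. ?P ys \<Longrightarrow> length ys \<le> length vs"
    using ex_has_greatest_nat[of ?P "[a, b]" length] by blast
  let ?v = "hd vs"
  have "vs \<noteq> []" using vs by auto
  then have hd_vs: "?v = vs ! 0" "?v \<in> V" using vs by (auto simp: hd_conv_nth)
  have "{e\<in>E. ?v \<in> e} \<subseteq> {{?v, vs ! 1}}"
  proof
    fix f assume f_at_v: "f \<in> {e\<in>E. ?v \<in> e}"
    then obtain x y where "f = {x, y}" "x \<noteq> y" "f \<subseteq> V"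
      using g by (force simp: is_graph_def card_2_iff)
    then obtain w where f: "f = {?v, w}" "f \<in> E" "w \<noteq> ?v" "w \<in> V"
      using f_at_v
      by (metis (mono_tags, lifting) empty_iff insert_commute insert_iff insert_subset mem_Collect_eq)
    have "w \<in> set vs"
    proof (rule ccontr)
      assume "w \<notin> set vs"
      then have "?P (w # vs)" using vs f hd_vs by (auto simp: simple_path_Cons insert_commute)
      then show False using longest[of "w # vs"] by simp
    qed
    then obtain j where j: "j < length vs" "vs ! j = w" by (meson in_set_conv_nth)
    have "j = 1"
    proof (rule ccontr)
      assume "j \<noteq> 1"
      with j f hd_vs have "2 \<le> j" by (metis One_nat_def less_2_cases not_less)
      then have "is_cycle E (take (Suc j) vs)"
        using vs j f hd_vs by (intro is_cycle_close_simple_path) (auto simp: insert_commute)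
      then show False using ac by (auto simp: acyclic_graph_def)
    qed
    then show "f \<in> {{?v, vs ! 1}}" using f j by simp
  qed
  then have "degree E ?v \<le> card {{?v, vs ! 1}}" unfolding degree_def by (intro card_mono) auto
  then show thesis using that hd_vs by simp
qed

lemma acyclic_graph_card_edges_less:
  "is_graph V E \<Longrightarrow> acyclic_graph E \<Longrightarrow> V \<noteq> {} \<Longrightarrow> card E < card V"
proof (induction "card V" arbitrary: V E rule: less_induct)
  case less
  have fV: "finite V" using less.prems by (simp add: is_graph_def)
  show ?case
  proof (cases "E = {}")
    case True then show ?thesis using less.prems fV by (simp add: card_gt_0_iff)
  next
    case False
    obtain v where v: "v \<in> V" "degree E v \<le> 1"
      using acyclic_graph_has_leaf less.prems(1,2) False by blast
    let ?E' = "{e\<in>E. v \<notin> e}"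
    have g': "is_graph (V - {v}) ?E'" using less.prems(1) by (auto simp: is_graph_def)
    have ac': "acyclic_graph ?E'"
      using less.prems(2) by (auto simp: acyclic_graph_def is_cycle_def)
    obtain e where e: "e \<in> E" using False by blast
    then have "card e = 2" "e \<subseteq> V" using less.prems(1) by (auto simp: is_graph_def)
    then have "V - {v} \<noteq> {}" by (auto simp: card_2_iff)
    moreover have smaller: "card (V - {v}) < card V" using fV v(1) by (rule card_Diff1_less)
    ultimately have "card ?E' < card (V - {v})" using less.hyps g' ac' by blast
    moreover have "card E \<le> card ?E' + degree E v"
    proof -
      have "E = ?E' \<union> {e\<in>E. v \<in> e}" by auto
      then show ?thesis unfolding degree_def by (metis card_Un_le)
    qed
    ultimately show ?thesis using v(2) smaller by linarith
  qed
qed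

lemma connected_graph_add_leaf:
  assumes c: "connected_graph V E" and v: "v \<in> V"
  shows "connected_graph (insert w V) (insert {v, w} E)"
proof -
  let ?R = "adj_rel (insert {v, w} E)"
  have "adj_rel E \<subseteq> ?R" by (auto simp: adj_rel_def)
  then have old: "(a, b) \<in> ?R\<^sup>*" if "a \<in> V" "b \<in> V" for a b
    using c that rtrancl_mono unfolding connected_graph_def by blast
  have "(v, w) \<in> ?R" "(w, v) \<in> ?R" by (auto simp: adj_rel_def insert_commute)
  then have "(a, v) \<in> ?R\<^sup>* \<and> (v, a) \<in> ?R\<^sup>*" if "a \<in> insert w V" for a
    using that old[of a v] old[of v a] v by blast
  then show ?thesis unfolding connected_graph_def by (meson rtrancl_trans)
qed

lemma acyclic_graph_add_leaf:
  assumes ac: "acyclic_graph E" and w: "\<forall>e\<in>E. w \<notin> e" and vw: "v \<noteq> w"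
  shows "acyclic_graph (insert {v, w} E)"
  unfolding acyclic_graph_def
proof
  assume "\<exists>vs. is_cycle (insert {v, w} E) vs"
  then obtain vs where L: "3 \<le> length vs" and dvs: "distinct vs"
    and edge: "\<And>i. i < length vs \<Longrightarrow> {vs ! i, vs ! ((i + 1) mod length vs)} \<in> insert {v, w} E"
    by (auto simp: is_cycle_def)
  let ?L = "length vs"
  show False
  proof (cases "w \<in> set vs")
    case False
    have "(i + 1) mod ?L < ?L" for i using L by (intro mod_less_divisor) linarith
    then have "w \<notin> {vs ! i, vs ! ((i + 1) mod ?L)}" if "i < ?L" for i
      using False that nth_mem[of i vs] nth_mem[of "(i + 1) mod ?L" vs] by auto
    then have "{vs ! i, vs ! ((i + 1) mod ?L)} \<noteq> {v, w}" if "i < ?L" for i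
      using that by (metis insert_iff)
    then have "is_cycle E vs" using L dvs edge unfolding is_cycle_def by blast
    then show False using ac by (auto simp: acyclic_graph_def)
  next
    case True
    then obtain i where i: "i < ?L" "vs ! i = w" by (auto simp: in_set_conv_nth)
    define j where "j = (if i = 0 then ?L - 1 else i - 1)"
    have j: "j < ?L" "(j + 1) mod ?L = i" "j \<noteq> (i + 1) mod ?L"
      using i L unfolding j_def by (auto simp: mod_Suc)
    have "{w, vs ! ((i + 1) mod ?L)} = {v, w}" "{vs ! j, w} = {v, w}"
      using edge[of i] edge[of j] i j w by auto
    then have "vs ! ((i + 1) mod ?L) = v" "vs ! j = v"
      using vw by (auto simp: doubleton_eq_iff)
    moreover have "(i + 1) mod ?L < ?L" using L by (intro mod_less_divisor) linarith
    ultimately show False using dvs j by (metis nth_eq_iff_index_eq)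
  qed
qed

lemma is_tree_add_leaf:
  assumes t: "is_tree V E" and v: "v \<in> V" and w: "w \<notin> V"
  shows "is_tree (insert w V) (insert {v, w} E)"
proof -
  have vw: "v \<noteq> w" using v w by blast
  have g: "is_graph V E" using t by (simp add: is_tree_def)
  then have "is_graph (insert w V) (insert {v, w} E)" using v vw by (auto simp: is_graph_def)
  moreover have "\<forall>e\<in>E. w \<notin> e" using g w by (auto simp: is_graph_def)
  ultimately show ?thesis
    using t v vw connected_graph_add_leaf acyclic_graph_add_leaf by (simp add: is_tree_def)
qed

lemma is_tree_attach_leaves:
  assumes t: "is_tree {0..<N} E" and l: "l < N"
  shows "\<exists>E'. is_tree {0..<N + m} E' \<and> degree E' l = degree E l + m \<and>
     (\<forall>u<N. u \<noteq> l \<longrightarrow> degree E' u = degree E u) \<and> (\<forall>u\<in>{N..<N + m}. degree E' u = 1)"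
proof (induction m)
  case 0
  show ?case using t by auto
next
  case (Suc m)
  then obtain E' where E': "is_tree {0..<N + m} E'" "degree E' l = degree E l + m"
    "\<forall>u<N. u \<noteq> l \<longrightarrow> degree E' u = degree E u" "\<forall>u\<in>{N..<N + m}. degree E' u = 1"
    by blast
  let ?w = "N + m"
  have "is_tree (insert ?w {0..<N + m}) (insert {l, ?w} E')"
    using E'(1) l by (intro is_tree_add_leaf) auto
  moreover have "insert ?w {0..<N + m} = {0..<N + Suc m}" by auto
  moreover have g: "is_graph {0..<N + m} E'" using E'(1) by (simp add: is_tree_def)
  then have "finite E'" "{l, ?w} \<notin> E'" by (auto simp: is_graph_def intro: finite_edges[OF g])
  moreover have "degree E' ?w = 0"
    using g unfolding degree_def is_graph_def by (fastforce simp: card_eq_0_iff)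
  ultimately show ?case
    using E'(2-4) l by (intro exI[of _ "insert {l, ?w} E'"]) (auto simp: degree_insert)
qed

lemma is_tree_singleton: "is_tree {v} {}"
  by (auto simp: is_tree_def is_graph_def connected_graph_def acyclic_graph_def is_cycle_def)
    (rule exI[of _ 0], auto)

lemma caterpillar_exists:
  assumes "finite X" "\<forall>d\<in>X. 1 < d"
  shows "\<exists>N E l. is_tree {0..<N} E \<and> l < N \<and> degree E l = 1 \<and>
     (\<lambda>v. int (degree E v)) ` {0..<N} = insert 1 X \<and> int N = 2 + (\<Sum>d\<in>X. d - 1)"
  using assms
proof (induction X rule: finite_induct)
  case empty
  have "is_tree (insert 1 {0}) (insert {0, 1} {})"
    by (rule is_tree_add_leaf[OF is_tree_singleton]) auto
  moreover have "insert 1 {0} = {0..<2::nat}" by auto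
  ultimately have tree: "is_tree {0..<2} {{0, 1}}" by simp
  have deg: "degree {{0, 1}} v = 1" if "v < 2" for v :: nat
  proof -
    have "{e\<in>{{0, 1}}. v \<in> e} = {{0, 1}}" using that by (auto simp: less_2_cases_iff)
    then show ?thesis by (simp add: degree_def)
  qed
  have "(\<lambda>v. int (degree {{0, 1}} v)) ` {0..<2} = (\<lambda>_. 1) ` {0..<2::nat}"
    using deg by (intro image_cong) auto
  then have "(\<lambda>v. int (degree {{0, 1}} v)) ` {0..<2} = {1}" by (simp add: image_constant_conv)
  then show ?case using tree deg[of 1] by (intro exI[of _ 2] exI[of _ "{{0, 1}}"] exI[of _ 1]) simp
next
  case (insert d X)
  then obtain N E l where NE: "is_tree {0..<N} E" "l < N" "degree E l = 1"
    "(\<lambda>v. int (degree E v)) ` {0..<N} = insert 1 X" "int N = 2 + (\<Sum>d\<in>X. d - 1)"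
    by auto
  define m where "m = nat (d - 1)"
  have m: "1 \<le> m" "int m = d - 1" using insert.prems by (auto simp: m_def)
  obtain E' where E': "is_tree {0..<N + m} E'" "degree E' l = degree E l + m"
    "\<forall>u<N. u \<noteq> l \<longrightarrow> degree E' u = degree E u" "\<forall>u\<in>{N..<N + m}. degree E' u = 1"
    using is_tree_attach_leaves[OF NE(1,2)] by blast
  let ?f = "\<lambda>v. int (degree E v)" and ?f' = "\<lambda>v. int (degree E' v)"
  have "{0..<N + m} = insert l (({0..<N} - {l}) \<union> {N..<N + m})" using NE(2) by auto
  then have "?f' ` {0..<N + m} = insert (?f' l) (?f' ` ({0..<N} - {l}) \<union> ?f' ` {N..<N + m})"
    by (simp add: image_Un)
  also have "\<dots> = insert d (?f ` ({0..<N} - {l}) \<union> {1})"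
    using E'(2-4) NE(3) m by (auto simp: image_constant_conv intro!: image_cong)
  also have "?f ` ({0..<N} - {l}) \<union> {1} = ?f ` {0..<N}"
    using NE(2,3) by auto
  finally have "?f' ` {0..<N + m} = insert 1 (insert d X)" using NE(4) by auto
  moreover have "int (N + m) = 2 + (\<Sum>d\<in>insert d X. d - 1)"
    using NE(5) m insert.hyps by simp
  ultimately show ?case using E' m by (intro exI[of _ "N + m"] exI[of _ E'] exI[of _ N]) auto
qed

lemma tree_realizing_card_lower_bound:
  assumes t: "is_tree V E" and r: "realizes V E s D" and D: "\<forall>d\<in>D. 1 \<le> d"
  shows "2 + (\<Sum>d\<in>D. d - 1) \<le> int (card V)"
proof -
  have g: "is_graph V E" and fV: "finite V" and "acyclic_graph E" "V \<noteq> {}"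
    using t by (auto simp: is_tree_def is_graph_def)
  have D_img: "D = sdeg s E ` V" using r by (simp add: realizes_def)
  then obtain U where U: "U \<subseteq> V" "inj_on (sdeg s E) U" "D = sdeg s E ` U"
    using subset_image_inj[of D "sdeg s E" V] by blast
  have "(\<Sum>d\<in>D. d - 1) = (\<Sum>v\<in>U. sdeg s E v - 1)"
    using sum.reindex[OF U(2)] U(3) by simp
  also have "\<dots> \<le> (\<Sum>v\<in>V. sdeg s E v - 1)"
    using D D_img by (intro sum_mono2[OF fV U(1)]) auto
  also have "\<dots> = (\<Sum>v\<in>V. sdeg s E v) - int (card V)"
    by (simp add: sum_subtractf)
  also have "\<dots> \<le> 2 * int (card E) - int (card V)"
    using sum_sdeg_le[OF g] by simp
  also have "\<dots> \<le> int (card V) - 2"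
    using acyclic_graph_card_edges_less[OF g \<open>acyclic_graph E\<close> \<open>V \<noteq> {}\<close>] by simp
  finally show ?thesis by simp
qed

lemma sigma_eq_sum:
  assumes "finite D" "1 \<in> D" "\<forall>d\<in>D. 1 \<le> d"
  shows "int (sigma D) = 2 + (\<Sum>d\<in>D. d - 1)"
proof -
  have sum_D: "(\<Sum>d\<in>D - {1}. d - 1) = (\<Sum>d\<in>D. d - 1)"
    using assms(1,2) by (simp add: sum_diff1)
  obtain N E where NE: "is_tree {0..<N} E" "(\<lambda>v. int (degree E v)) ` {0..<N} = D"
    "int N = 2 + (\<Sum>d\<in>D. d - 1)"
    using caterpillar_exists[of "D - {1}"] assms sum_D by (fastforce simp: insert_absorb)
  have "sigma D = N" unfolding sigma_def
  proof (rule Least_equality)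
    have "realizes {0..<N} E (\<lambda>_. True) D"
      using NE(2) by (simp add: realizes_def sdeg_all_positive)
    then show "\<exists>V E s. is_tree V E \<and> realizes V E s D \<and> card V = N"
      using NE(1) by fastforce
  next
    fix k assume "\<exists>V E s. is_tree V E \<and> realizes V E s D \<and> card V = k"
    then show "N \<le> k" using tree_realizing_card_lower_bound assms(3) NE(3) by fastforce
  qed
  then show ?thesis using NE(3) by simp
qed

theorem mainTheorem8:
  fixes n :: nat and x :: "nat \<Rightarrow> int" and D :: "int set"
  assumes "n \<ge> 1"
    and "inj_on x {1..n}"
    and "\<forall>i\<in>{1..n}. x i > 1"
    and "D = insert 1 (x ` {1..n})"
  shows "int (sigma D) = 2 - int n + (\<Sum>i=1..n. x i)"
proof -
  have "int (sigma D) = 2 + (\<Sum>d\<in>D. d - 1)"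
    using assms(3,4) by (intro sigma_eq_sum) auto
  also have "(\<Sum>d\<in>D. d - 1) = (\<Sum>d\<in>x ` {1..n}. d - 1)"
    using assms(4) by (simp add: sum.insert_if)
  also have "\<dots> = (\<Sum>i=1..n. x i - 1)"
    using sum.reindex[OF assms(2)] by simp
  also have "\<dots> = (\<Sum>i=1..n. x i) - int n"
    by (simp add: sum_subtractf)
  finally show ?thesis by simp
qed

end
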